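(* Assume the Continuum Hypothesis. Then there is no Bernstein set $B\subseteq\mathbb R$ which is an $\omega_1$-covering.
   Context: A set $B\subseteq\mathbb R$ is a Bernstein set if for every uncountable Borel set $Z\subseteq\mathbb R$ both $Z\cap B$ and $Z\setminus B$ are nonempty. A set $A\subseteq\mathbb R$ is an $\omega_1$-covering if for every $C\subseteq\mathbb R$ with $|C|=\omega_1$ there is $x\in\mathbb R$ with $C+x\subseteq A$. *)

theory Defs
  imports "HOL-Analysis.Analysis"
begin

text \<open>omega_1 is the successor cardinal of aleph_0 (natLeq).\<close>

definition CH :: bool where
  "CH \<longleftrightarrow> ordIso2 (card_of (UNIV :: real set)) (cardSuc natLeq)"

definition bernstein_set :: "real set \<Rightarrow> bool" where
  "bernstein_set B \<longleftrightarrow>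
     (\<forall>Z. Z \<in> sets borel \<and> uncountable Z \<longrightarrow> Z \<inter> B \<noteq> {} \<and> Z - B \<noteq> {})"

definition omega1_covering :: "real set \<Rightarrow> bool" where
  "omega1_covering A \<longleftrightarrow>
     (\<forall>C :: real set. ordIso2 (card_of C) (cardSuc natLeq) \<longrightarrow>
        (\<exists>x::real. (\<lambda>c. c + x) ` C \<subseteq> A))"

end

theory Submission
  imports Defs
begin

text \<open>Under CH the real line itself has cardinality \<open>\<omega>\<^sub>1\<close>, so an \<open>\<omega>\<^sub>1\<close>-covering set
  contains a translate of \<open>\<real>\<close> and is therefore all of \<open>\<real>\<close>; but the complement of a
  Bernstein set meets the uncountable Borel set \<open>\<real>\<close>.\<close>

lemma translate_UNIV_real: "(\<lambda>c. c + x) ` (UNIV :: real set) = UNIV"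
  by (metis surj_plus_right)

lemma omega1_covering_eq_UNIV:
  assumes "CH" and "omega1_covering A"
  shows "A = UNIV"
proof -
  from assms obtain x :: real where "(\<lambda>c. c + x) ` UNIV \<subseteq> A"
    unfolding omega1_covering_def CH_def by blast
  then show ?thesis
    by (simp add: translate_UNIV_real top.extremum_unique)
qed

lemma bernstein_set_neq_UNIV:
  assumes "bernstein_set B"
  shows "B \<noteq> UNIV"
proof -
  have "UNIV \<in> sets (borel :: real measure)"
    by (metis sets.top space_borel)
  with assms uncountable_UNIV_real have "UNIV - B \<noteq> {}"
    unfolding bernstein_set_def by blast
  then show ?thesis by blast
qed

theorem mainTheorem7:
  assumes "CH"
  shows "\<not> (\<exists>B :: real set. bernstein_set B \<and> omega1_covering B)"
  using assms bernstein_set_neq_UNIV omega1_covering_eq_UNIV by blast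

end
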